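(* For every even positive integer $n$, letting $\frac{n}{2}\cdot K_2$ denote the perfect matching on $n$ vertices (the disjoint union of $n/2$ edges), $$\chi_{2K_2}\!\left(\tfrac{n}{2}\cdot K_2\right) = \left\lceil \sqrt{n + \tfrac14} + \tfrac12 \right\rceil.$$
   Context: All graphs are finite and simple. For a fixed bipartite graph $H$, a proper vertex coloring of a graph $G$ is called an $H$-avoiding coloring if for any two color classes, the subgraph of $G$ induced by their union contains no induced subgraph isomorphic to $H$. $\chi_H(G)$ denotes the minimum number of colors in an $H$-avoiding coloring of $G$. $2K_2$ is the disjoint union of two edges. *)

theory Defs
  imports Complex_Main
begin

definition simple_graph :: "'a set \<Rightarrow> ('a \<Rightarrow> 'a \<Rightarrow> bool) \<Rightarrow> bool" where
  "simple_graph V E \<longleftrightarrow> finite V \<and> (\<forall>u\<in>V. \<forall>v\<in>V. E u v \<longrightarrow> E v u) \<and> (\<forall>v\<in>V. \<not> E v v)"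

definition has_induced_copy ::
  "'b set \<Rightarrow> ('b \<Rightarrow> 'b \<Rightarrow> bool) \<Rightarrow> 'a set \<Rightarrow> ('a \<Rightarrow> 'a \<Rightarrow> bool) \<Rightarrow> bool" where
  "has_induced_copy VH EH S E \<longleftrightarrow>
     (\<exists>f. inj_on f VH \<and> f ` VH \<subseteq> S \<and> (\<forall>x\<in>VH. \<forall>y\<in>VH. EH x y \<longleftrightarrow> E (f x) (f y)))"

definition proper_coloring :: "'a set \<Rightarrow> ('a \<Rightarrow> 'a \<Rightarrow> bool) \<Rightarrow> ('a \<Rightarrow> nat) \<Rightarrow> bool" where
  "proper_coloring V E c \<longleftrightarrow> (\<forall>u\<in>V. \<forall>v\<in>V. E u v \<longrightarrow> c u \<noteq> c v)"

definition H_avoiding_coloring ::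
  "'b set \<Rightarrow> ('b \<Rightarrow> 'b \<Rightarrow> bool) \<Rightarrow> 'a set \<Rightarrow> ('a \<Rightarrow> 'a \<Rightarrow> bool) \<Rightarrow> nat \<Rightarrow> ('a \<Rightarrow> nat) \<Rightarrow> bool" where
  "H_avoiding_coloring VH EH V E k c \<longleftrightarrow>
     c ` V \<subseteq> {..<k} \<and> proper_coloring V E c \<and>
     (\<forall>i j. i \<noteq> j \<longrightarrow> \<not> has_induced_copy VH EH {v\<in>V. c v = i \<or> c v = j} E)"

definition chi_H ::
  "'b set \<Rightarrow> ('b \<Rightarrow> 'b \<Rightarrow> bool) \<Rightarrow> 'a set \<Rightarrow> ('a \<Rightarrow> 'a \<Rightarrow> bool) \<Rightarrow> nat" where
  "chi_H VH EH V E = (LEAST k. \<exists>c. H_avoiding_coloring VH EH V E k c)"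

definition twoK2_V :: "nat set" where "twoK2_V = {0,1,2,3}"
definition twoK2_E :: "nat \<Rightarrow> nat \<Rightarrow> bool" where
  "twoK2_E x y \<longleftrightarrow> {x,y} = {0,1} \<or> {x,y} = {2,3}"

text \<open>Perfect matching (n/2) K_2 on vertices 0..n-1: edges {2i, 2i+1}.\<close>

definition matching_V :: "nat \<Rightarrow> nat set" where "matching_V n = {..<n}"
definition matching_E :: "nat \<Rightarrow> nat \<Rightarrow> bool" where
  "matching_E x y \<longleftrightarrow> x \<noteq> y \<and> x div 2 = y div 2"

end

theory Submission
  imports Defs
begin

text \<open>Colour each matching edge with a set of two colours. An induced 2K_2 inside the union
  of two colour classes a, b consists of two matching edges both coloured {a, b}, so a proper
  colouring is 2K_2-avoiding exactly when distinct edges receive distinct colour pairs.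
  Hence n/2 edges can be coloured with k colours iff n/2 \<le> k choose 2, i.e. n \<le> k(k - 1),
  and solving this quadratic inequality for k gives the ceiling formula.\<close>

lemma matching_E_pair: "matching_E u v \<Longrightarrow> {u, v} = {2 * (u div 2), 2 * (u div 2) + 1}"
  unfolding matching_E_def by (auto simp: doubleton_eq_iff)

lemma has_induced_twoK2_in_matching_iff:
  "has_induced_copy twoK2_V twoK2_E S matching_E \<longleftrightarrow>
     (\<exists>i j. i \<noteq> j \<and> {2*i, 2*i+1, 2*j, 2*j+1} \<subseteq> S)"
proof
  assume "has_induced_copy twoK2_V twoK2_E S matching_E"
  then obtain f where inj: "inj_on f twoK2_V" and sub: "f ` twoK2_V \<subseteq> S"
    and edges: "\<forall>x\<in>twoK2_V. \<forall>y\<in>twoK2_V. twoK2_E x y \<longleftrightarrow> matching_E (f x) (f y)"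
    unfolding has_induced_copy_def by blast
  have E01: "matching_E (f 0) (f 1)" and E23: "matching_E (f 2) (f 3)"
    and N02: "\<not> matching_E (f 0) (f 2)"
    using edges unfolding twoK2_V_def twoK2_E_def by (auto simp: doubleton_eq_iff)
  have "f 0 \<noteq> f 2" using inj unfolding inj_on_def twoK2_V_def by auto
  with N02 have "f 0 div 2 \<noteq> f 2 div 2" unfolding matching_E_def by auto
  moreover have "{f 0, f 1, f 2, f 3} \<subseteq> S" using sub unfolding twoK2_V_def by auto
  ultimately show "\<exists>i j. i \<noteq> j \<and> {2*i, 2*i+1, 2*j, 2*j+1} \<subseteq> S"
    using matching_E_pair[OF E01] matching_E_pair[OF E23] by blast
next
  assume "\<exists>i j. i \<noteq> j \<and> {2*i, 2*i+1, 2*j, 2*j+1} \<subseteq> S"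
  then obtain i j where ij: "i \<noteq> j" and sub: "{2*i, 2*i+1, 2*j, 2*j+1} \<subseteq> S" by blast
  define f :: "nat \<Rightarrow> nat" where "f x = [2*i, 2*i+1, 2*j, 2*j+1] ! x" for x
  show "has_induced_copy twoK2_V twoK2_E S matching_E"
    unfolding has_induced_copy_def
  proof (intro exI[of _ f] conjI)
    show "inj_on f twoK2_V" using ij unfolding inj_on_def f_def twoK2_V_def by auto
    show "f ` twoK2_V \<subseteq> S" using sub unfolding f_def twoK2_V_def by auto
    show "\<forall>x\<in>twoK2_V. \<forall>y\<in>twoK2_V. twoK2_E x y \<longleftrightarrow> matching_E (f x) (f y)"
      using ij unfolding twoK2_V_def twoK2_E_def matching_E_def f_def
      by (auto simp: doubleton_eq_iff)
  qed
qed

definition edge_colors :: "(nat \<Rightarrow> nat) \<Rightarrow> nat \<Rightarrow> nat set" where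
  "edge_colors c i = {c (2*i), c (2*i+1)}"

lemma lessThan_double_eq: "{..<2*m} = (\<Union>i<m. {2*i, 2*i+1::nat})"
proof (intro set_eqI iffI)
  fix v :: nat assume "v \<in> {..<2*m}"
  then have "v div 2 < m" "v \<in> {2 * (v div 2), 2 * (v div 2) + 1}" by auto
  then show "v \<in> (\<Union>i<m. {2*i, 2*i+1})" by blast
qed auto

lemma image_matching_vertices: "c ` {..<2*m} = (\<Union>i<m. edge_colors c i)"
  unfolding lessThan_double_eq edge_colors_def by auto

lemma proper_coloring_matching_iff:
  "proper_coloring {..<2*m} matching_E c \<longleftrightarrow> (\<forall>i<m. card (edge_colors c i) = 2)"
proof
  assume proper: "proper_coloring {..<2*m} matching_E c"
  show "\<forall>i<m. card (edge_colors c i) = 2"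
  proof (intro allI impI)
    fix i assume "i < m"
    then have "c (2*i) \<noteq> c (2*i+1)"
      using proper unfolding proper_coloring_def matching_E_def by simp
    then show "card (edge_colors c i) = 2" unfolding edge_colors_def by simp
  qed
next
  assume card2: "\<forall>i<m. card (edge_colors c i) = 2"
  show "proper_coloring {..<2*m} matching_E c"
    unfolding proper_coloring_def
  proof (intro ballI impI)
    fix u v assume "u \<in> {..<2*m}" and "v \<in> {..<2*m}" and uv: "matching_E u v"
    then have "u div 2 < m" by auto
    with card2 have "card (c ` {u, v}) = 2"
      unfolding matching_E_pair[OF uv] edge_colors_def by simp
    then show "c u \<noteq> c v" by auto
  qed
qed

lemma two_subset_of_doubleton: "card A = 2 \<Longrightarrow> A \<subseteq> {a, b} \<Longrightarrow> A = {a, b}"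
  by (auto simp: card_2_iff)

lemma avoiding_iff_inj_edge_colors:
  assumes card2: "\<forall>i<m. card (edge_colors c i) = 2"
  shows "(\<forall>a b. a \<noteq> b \<longrightarrow>
            \<not> has_induced_copy twoK2_V twoK2_E {v\<in>{..<2*m}. c v = a \<or> c v = b} matching_E)
         \<longleftrightarrow> inj_on (edge_colors c) {..<m}"
    (is "(\<forall>a b. a \<noteq> b \<longrightarrow> \<not> has_induced_copy _ _ (?class a b) _) \<longleftrightarrow> _")
proof -
  have edge_in_class: "{2*i, 2*i+1} \<subseteq> ?class a b \<longleftrightarrow> i < m \<and> edge_colors c i \<subseteq> {a, b}"
    for i a b
    unfolding edge_colors_def by auto
  have two_edges_in_class: "{2*i, 2*i+1, 2*j, 2*j+1} \<subseteq> ?class a b \<longleftrightarrow>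
      {2*i, 2*i+1} \<subseteq> ?class a b \<and> {2*j, 2*j+1} \<subseteq> ?class a b" for i j a b
    by auto
  show ?thesis
    unfolding has_induced_twoK2_in_matching_iff
  proof (intro iffI inj_onI allI impI notI)
    fix i j
    assume avoid: "\<forall>a b. a \<noteq> b \<longrightarrow> \<not> (\<exists>i j. i \<noteq> j \<and> {2*i, 2*i+1, 2*j, 2*j+1} \<subseteq> ?class a b)"
      and i: "i \<in> {..<m}" and j: "j \<in> {..<m}" and same: "edge_colors c i = edge_colors c j"
    have "c (2*i) \<noteq> c (2*i+1)" using card2 i unfolding edge_colors_def by fastforce
    moreover have "{2*i, 2*i+1, 2*j, 2*j+1} \<subseteq> ?class (c (2*i)) (c (2*i+1))"
      using i j same unfolding two_edges_in_class edge_in_class by (auto simp: edge_colors_def)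
    ultimately show "i = j" using avoid by blast
  next
    fix a b :: nat
    assume inj: "inj_on (edge_colors c) {..<m}" and "a \<noteq> b"
      and "\<exists>i j. i \<noteq> j \<and> {2*i, 2*i+1, 2*j, 2*j+1} \<subseteq> ?class a b"
    then obtain i j where "i \<noteq> j" "i < m" "j < m"
      "edge_colors c i \<subseteq> {a, b}" "edge_colors c j \<subseteq> {a, b}"
      unfolding two_edges_in_class edge_in_class by blast
    with card2 two_subset_of_doubleton have "edge_colors c i = edge_colors c j" by metis
    with inj \<open>i \<noteq> j\<close> \<open>i < m\<close> \<open>j < m\<close> show False by (auto dest: inj_onD)
  qed
qed

lemma avoiding_coloring_matching_iff:
  "H_avoiding_coloring twoK2_V twoK2_E {..<2*m} matching_E k c \<longleftrightarrow>
     edge_colors c ` {..<m} \<subseteq> {A. A \<subseteq> {..<k} \<and> card A = 2} \<and> inj_on (edge_colors c) {..<m}"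
  unfolding H_avoiding_coloring_def image_matching_vertices proper_coloring_matching_iff
  using avoiding_iff_inj_edge_colors by blast

lemma Min_Max_of_card_2: "card A = 2 \<Longrightarrow> {Min A, Max A} = A"
  by (auto simp: card_2_iff min_def max_def split: if_splits)

lemma avoiding_coloring_matching_exists_iff:
  "(\<exists>c. H_avoiding_coloring twoK2_V twoK2_E {..<2*m} matching_E k c) \<longleftrightarrow> m \<le> k choose 2"
proof -
  let ?pairs = "{A. A \<subseteq> {..<k} \<and> card A = 2}"
  have card_pairs: "card ?pairs = k choose 2" using n_subsets[of "{..<k}" 2] by simp
  have "(\<exists>c. edge_colors c ` {..<m} \<subseteq> ?pairs \<and> inj_on (edge_colors c) {..<m}) \<longleftrightarrow>
        m \<le> k choose 2"
  proof
    assume "\<exists>c. edge_colors c ` {..<m} \<subseteq> ?pairs \<and> inj_on (edge_colors c) {..<m}"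
    then show "m \<le> k choose 2"
      using card_inj_on_le[of _ "{..<m}" ?pairs] card_pairs by fastforce
  next
    assume "m \<le> k choose 2"
    then obtain g where g: "g ` {..<m} \<subseteq> ?pairs" "inj_on g {..<m}"
      using card_le_inj[of "{..<m}" ?pairs] card_pairs by auto
    define c where "c v = (if even v then Min else Max) (g (v div 2))" for v
    have "edge_colors c i = g i" if "i < m" for i
      using g(1) that Min_Max_of_card_2 unfolding c_def edge_colors_def by auto
    then have "edge_colors c ` {..<m} \<subseteq> ?pairs \<and> inj_on (edge_colors c) {..<m}"
      using g by (auto simp: inj_on_def)
    then show "\<exists>c. edge_colors c ` {..<m} \<subseteq> ?pairs \<and> inj_on (edge_colors c) {..<m}" by blast
  qed
  then show ?thesis unfolding avoiding_coloring_matching_iff .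
qed

lemma le_pronic_iff_sqrt:
  fixes n k :: nat
  assumes "n > 0"
  shows "n \<le> k * (k - 1) \<longleftrightarrow> sqrt (real n + 1/4) + 1/2 \<le> real k"
proof (cases "k = 0")
  case True
  have "sqrt (real n + 1/4) \<ge> 0" by simp
  then show ?thesis using assms True by linarith
next
  case False
  have "sqrt (real n + 1/4) + 1/2 \<le> real k \<longleftrightarrow> real n + 1/4 \<le> (real k - 1/2)^2"
    using False real_le_lsqrt[of "real k - 1/2" "real n + 1/4"]
      sqrt_le_D[of "real n + 1/4" "real k - 1/2"] by force
  also have "\<dots> \<longleftrightarrow> real n \<le> real k * (real k - 1)"
    by (simp add: power2_eq_square algebra_simps)
  also have "real k * (real k - 1) = real (k * (k - 1))"
    using False by (simp add: of_nat_diff)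
  finally show ?thesis by (simp only: of_nat_le_iff)
qed

lemma Least_real_le_eq_nat_ceiling: "(LEAST k::nat. x \<le> real k) = nat \<lceil>x\<rceil>"
  by (rule Least_equality) (simp_all add: real_nat_ceiling_ge)

theorem corollary3:
  fixes n :: nat
  assumes "even n" and "n > 0"
  shows "int (chi_H twoK2_V twoK2_E (matching_V n) matching_E)
           = \<lceil>sqrt (real n + 1/4) + 1/2\<rceil>"
proof -
  define x where "x = sqrt (real n + 1/4) + 1/2"
  obtain m where n: "n = 2 * m" using assms(1) by blast
  have "(\<exists>c. H_avoiding_coloring twoK2_V twoK2_E (matching_V n) matching_E k c) \<longleftrightarrow>
        x \<le> real k" for k
  proof -
    have "(\<exists>c. H_avoiding_coloring twoK2_V twoK2_E (matching_V n) matching_E k c) \<longleftrightarrow>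
          m \<le> k choose 2"
      unfolding matching_V_def n by (rule avoiding_coloring_matching_exists_iff)
    also have "\<dots> \<longleftrightarrow> n \<le> k * (k - 1)"
    proof -
      have "even (k * (k - 1))" by auto
      then show ?thesis unfolding n choose_two by fastforce
    qed
    also have "\<dots> \<longleftrightarrow> x \<le> real k"
      unfolding x_def by (rule le_pronic_iff_sqrt[OF assms(2)])
    finally show ?thesis .
  qed
  then have "chi_H twoK2_V twoK2_E (matching_V n) matching_E = nat \<lceil>x\<rceil>"
    unfolding chi_H_def Least_real_le_eq_nat_ceiling[symmetric] by presburger
  moreover have "x > 0" unfolding x_def by (simp add: add_nonneg_pos)
  ultimately show ?thesis unfolding x_def by simp
qed

end
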